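(* The fundamental group $\pi_1(\mathrm{Conf}^{lf}_\infty(\mathbb C),\widetilde{\mathbb N})$ is uncountable.
   Context: $\mathrm{Conf}^{lf}_\infty(\mathbb C)$ is the set of sequences $(x_j)_{j\ge1}$ of pairwise distinct complex numbers such that $\{j:|x_j|\le R\}$ is finite for all $R>0$, with metric $d_{\Sigma}(x,y)=\sum_j2^{-j}\min\{|x_j-y_j|,1\}+d_{\mathcal V}(P(x),P(y))$, where $P(x)=\{x_j\}$ and $d_{\mathcal V}$ is the vague metric $d_{\mathcal V}(A,B)=\sum_j 2^{-j}\frac{|\sum_{a\in A}\varphi_j(a)-\sum_{b\in B}\varphi_j(b)|}{1+|\sum_{a\in A}\varphi_j(a)-\sum_{b\in B}\varphi_j(b)|}$ for a fixed sequence $(\varphi_j)$ of compactly supported continuous real functions such that for each $m$ those supported in $\{|z|\le m\}$ are sup-norm dense among such functions supported in $\{|z|\le m\}$. $\widetilde{\mathbb N}=(1,2,3,\dots)$. *)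

theory Defs
  imports "HOL-Analysis.Analysis"
begin

text \<open>Sequences are indexed from 0 here: the paper's x_j (j \<ge> 1) is x (j-1).\<close>

definition conf_lf :: "(nat \<Rightarrow> complex) set" where
  "conf_lf = {x. inj x \<and> (\<forall>R>0. finite {j. cmod (x j) \<le> R})}"

definition nat_config :: "nat \<Rightarrow> complex" where
  "nat_config j = of_nat (j + 1)"

definition admissible_tests :: "(nat \<Rightarrow> complex \<Rightarrow> real) \<Rightarrow> bool" where
  "admissible_tests \<phi> \<longleftrightarrow>
     (\<forall>j. continuous_on UNIV (\<phi> j) \<and> compact (closure {z. \<phi> j z \<noteq> 0})) \<and>
     (\<forall>m::nat. \<forall>f::complex \<Rightarrow> real. \<forall>\<epsilon>>0.
        continuous_on UNIV f \<and> closure {z. f z \<noteq> 0} \<subseteq> cball 0 (real m) \<longrightarrow>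
        (\<exists>j. closure {z. \<phi> j z \<noteq> 0} \<subseteq> cball 0 (real m) \<and>
             (\<forall>z. \<bar>f z - \<phi> j z\<bar> < \<epsilon>)))"

text \<open>Integral of a test function against the counting measure of a locally finite set
  (the set of non-zero terms is finite).\<close>
definition test_sum :: "(complex \<Rightarrow> real) \<Rightarrow> complex set \<Rightarrow> real" where
  "test_sum g A = (\<Sum>a\<in>A \<inter> {z. g z \<noteq> 0}. g a)"

definition vague_dist :: "(nat \<Rightarrow> complex \<Rightarrow> real) \<Rightarrow> complex set \<Rightarrow> complex set \<Rightarrow> real" where
  "vague_dist \<phi> A B = (\<Sum>j. (1/2) ^ (j + 1) *
      (\<bar>test_sum (\<phi> j) A - test_sum (\<phi> j) B\<bar> / (1 + \<bar>test_sum (\<phi> j) A - test_sum (\<phi> j) B\<bar>)))"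

definition conf_dist :: "(nat \<Rightarrow> complex \<Rightarrow> real) \<Rightarrow> (nat \<Rightarrow> complex) \<Rightarrow> (nat \<Rightarrow> complex) \<Rightarrow> real" where
  "conf_dist \<phi> x y = (\<Sum>j. (1/2) ^ (j + 1) * min (cmod (x j - y j)) 1)
                      + vague_dist \<phi> (range x) (range y)"

definition conf_topology :: "(nat \<Rightarrow> complex \<Rightarrow> real) \<Rightarrow> (nat \<Rightarrow> complex) topology" where
  "conf_topology \<phi> = Metric_space.mtopology conf_lf (conf_dist \<phi>)"

definition loops_at :: "'a topology \<Rightarrow> 'a \<Rightarrow> (real \<Rightarrow> 'a) set" where
  "loops_at X b = {g. pathin X g \<and> g 0 = b \<and> g 1 = b}"

definition loop_homotopic :: "'a topology \<Rightarrow> 'a \<Rightarrow> (real \<Rightarrow> 'a) \<Rightarrow> (real \<Rightarrow> 'a) \<Rightarrow> bool" where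
  "loop_homotopic X b p q \<longleftrightarrow>
     (\<exists>h. continuous_map (prod_topology (top_of_set {0..1::real}) (top_of_set {0..1::real})) X h \<and>
          (\<forall>s\<in>{0..1}. h (0, s) = p s \<and> h (1, s) = q s) \<and>
          (\<forall>t\<in>{0..1}. h (t, 0) = b \<and> h (t, 1) = b))"

definition fundamental_group_set :: "'a topology \<Rightarrow> 'a \<Rightarrow> (real \<Rightarrow> 'a) set set" where
  "fundamental_group_set X b =
     loops_at X b // {(p, q). p \<in> loops_at X b \<and> q \<in> loops_at X b \<and> loop_homotopic X b p q}"

end

theory Submission
  imports Defs "HOL-Complex_Analysis.Complex_Analysis"
begin

text \<open>For a set S of natural numbers, let the k-th pair of points 2k+1, 2k+2 of the base
  configuration make one full turn about its midpoint if k \<in> S and stay fixed otherwise.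
  Each test function sees only finitely many points of a locally finite configuration, so a
  uniform motion of all points is continuous for the metric; hence these motions are loops.
  The two points of a pair never collide, so the winding number of their difference around 0
  is a homotopy invariant of loops; it is 1 for k \<in> S and 0 otherwise. The loops are therefore
  pairwise non-homotopic, and the fundamental group contains a copy of the power set of \<nat>.\<close>

lemma weights_sums: "(\<lambda>j. (1/2::real) ^ (j + 1)) sums 1"
  using sums_mult[OF geometric_sums[of "1/2::real"], of "1/2"] by simp

lemma summable_weighted:
  fixes a :: "nat \<Rightarrow> real"
  assumes "\<And>j. \<bar>a j\<bar> \<le> 1"
  shows "summable (\<lambda>j. (1/2) ^ (j + 1) * a j)"
proof (rule summable_comparison_test)
  show "\<exists>N. \<forall>j\<ge>N. norm ((1/2::real) ^ (j + 1) * a j) \<le> (1/2) ^ (j + 1)"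
    using assms by (auto simp: abs_mult intro: mult_left_le)
qed (use weights_sums in \<open>rule sums_summable\<close>)

lemma weighted_suminf_nonneg:
  fixes a :: "nat \<Rightarrow> real"
  assumes "\<And>j. 0 \<le> a j" "\<And>j. a j \<le> 1"
  shows "0 \<le> (\<Sum>j. (1/2) ^ (j + 1) * a j)"
  using assms by (intro suminf_nonneg summable_weighted) auto

lemma weighted_term_le_suminf:
  fixes a :: "nat \<Rightarrow> real"
  assumes "\<And>j. 0 \<le> a j" "\<And>j. a j \<le> 1"
  shows "(1/2) ^ (k + 1) * a k \<le> (\<Sum>j. (1/2) ^ (j + 1) * a j)"
  using sum_le_suminf[OF summable_weighted, of a "{k}"] assms by (simp add: abs_le_iff)

lemma weighted_suminf_triangle:
  fixes a b c :: "nat \<Rightarrow> real"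
  assumes "\<And>j. \<bar>a j\<bar> \<le> 1" "\<And>j. \<bar>b j\<bar> \<le> 1" "\<And>j. \<bar>c j\<bar> \<le> 1"
    and "\<And>j. a j \<le> b j + c j"
  shows "(\<Sum>j. (1/2) ^ (j + 1) * a j) \<le> (\<Sum>j. (1/2) ^ (j + 1) * b j) + (\<Sum>j. (1/2) ^ (j + 1) * c j)"
proof -
  have "(\<Sum>j. (1/2) ^ (j + 1) * a j) \<le> (\<Sum>j. (1/2) ^ (j + 1) * b j + (1/2) ^ (j + 1) * c j)"
    using assms by (intro suminf_le summable_add summable_weighted) (auto simp flip: distrib_left)
  also have "\<dots> = (\<Sum>j. (1/2) ^ (j + 1) * b j) + (\<Sum>j. (1/2) ^ (j + 1) * c j)"
    using assms by (intro suminf_add[symmetric] summable_weighted)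
  finally show ?thesis .
qed

lemma min_dist_one_triangle:
  fixes x y z :: "'a::metric_space"
  shows "min (dist x z) 1 \<le> min (dist x y) 1 + min (dist y z) 1"
  using dist_triangle[of x z y] zero_le_dist[of x y] zero_le_dist[of y z] by linarith

lemma abs_diff_div_one_plus_triangle:
  fixes a b c :: real
  shows "\<bar>a - c\<bar> / (1 + \<bar>a - c\<bar>) \<le> \<bar>a - b\<bar> / (1 + \<bar>a - b\<bar>) + \<bar>b - c\<bar> / (1 + \<bar>b - c\<bar>)"
proof -
  have mono: "s / (1 + s) \<le> t / (1 + t)" if "0 \<le> s" "s \<le> t" for s t :: real
    using that by (simp add: divide_simps) (simp add: algebra_simps)
  have subadd: "(s + t) / (1 + (s + t)) \<le> s / (1 + s) + t / (1 + t)" if "0 \<le> s" "0 \<le> t" for s t :: real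
    using that by (simp add: divide_simps) (auto simp: algebra_simps)
  have "\<bar>a - c\<bar> \<le> \<bar>a - b\<bar> + \<bar>b - c\<bar>"
    by arith
  then show ?thesis
    using order_trans[OF mono subadd] by simp
qed

lemma vague_dist_triangle: "vague_dist \<phi> A C \<le> vague_dist \<phi> A B + vague_dist \<phi> B C"
  unfolding vague_dist_def
  by (rule weighted_suminf_triangle) (simp_all add: abs_diff_div_one_plus_triangle)

lemma vague_dist_nonneg: "0 \<le> vague_dist \<phi> A B"
  unfolding vague_dist_def by (rule weighted_suminf_nonneg) auto

lemma conf_dist_ge_coordinate: "(1/2) ^ (k + 1) * min (cmod (x k - y k)) 1 \<le> conf_dist \<phi> x y"
proof -
  have "(1/2) ^ (k + 1) * min (cmod (x k - y k)) 1 \<le> (\<Sum>j. (1/2) ^ (j + 1) * min (cmod (x j - y j)) 1)"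
    by (rule weighted_term_le_suminf) auto
  then show ?thesis
    unfolding conf_dist_def using vague_dist_nonneg[of \<phi> "range x" "range y"] by linarith
qed

lemma conf_dist_nonneg: "0 \<le> conf_dist \<phi> x y"
  unfolding conf_dist_def by (intro add_nonneg_nonneg weighted_suminf_nonneg vague_dist_nonneg) auto

lemma conf_dist_commute: "conf_dist \<phi> x y = conf_dist \<phi> y x"
  unfolding conf_dist_def vague_dist_def by (simp add: norm_minus_commute abs_minus_commute)

lemma conf_dist_triangle: "conf_dist \<phi> x z \<le> conf_dist \<phi> x y + conf_dist \<phi> y z"
proof -
  have "(\<Sum>j. (1/2) ^ (j + 1) * min (cmod (x j - z j)) 1) \<le>
        (\<Sum>j. (1/2) ^ (j + 1) * min (cmod (x j - y j)) 1) + (\<Sum>j. (1/2) ^ (j + 1) * min (cmod (y j - z j)) 1)"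
    by (rule weighted_suminf_triangle) (simp_all add: min_dist_one_triangle flip: dist_complex_def)
  then show ?thesis
    unfolding conf_dist_def using vague_dist_triangle[of \<phi> "range x" "range z" "range y"] by linarith
qed

lemma conf_dist_eq_0_iff: "conf_dist \<phi> x y = 0 \<longleftrightarrow> x = y"
proof
  assume "conf_dist \<phi> x y = 0"
  then have "(1/2) ^ (k + 1) * min (cmod (x k - y k)) 1 \<le> 0" for k
    by (metis conf_dist_ge_coordinate)
  then show "x = y"
    by (intro ext) (auto simp: mult_le_0_iff power_le_zero_eq min_le_iff_disj)
qed (simp add: conf_dist_def vague_dist_def)

lemma conf_dist_metric: "Metric_space M (conf_dist \<phi>)"
  by unfold_locales (auto simp: conf_dist_nonneg conf_dist_commute conf_dist_triangle conf_dist_eq_0_iff)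

lemma topspace_conf_topology: "topspace (conf_topology \<phi>) = conf_lf"
  by (simp add: conf_topology_def Metric_space.topspace_mtopology[OF conf_dist_metric])

lemma continuous_map_conf_coordinate: "continuous_map (conf_topology \<phi>) euclidean (\<lambda>x. x k)"
  unfolding conf_topology_def Metric_space.continuous_map_from_metric[OF conf_dist_metric]
proof (intro conjI ballI allI impI)
  fix a :: "nat \<Rightarrow> complex" and U assume "openin euclidean U \<and> a k \<in> U"
  then obtain e where e: "e > 0" "ball (a k) e \<subseteq> U"
    using open_contains_ball by force
  show "\<exists>r>0. \<forall>x. x \<in> conf_lf \<and> conf_dist \<phi> a x < r \<longrightarrow> x k \<in> U"
  proof (intro exI conjI allI impI)
    show "(1/2) ^ (k + 1) * min e 1 > (0::real)"
      using e by simp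
    fix x assume "x \<in> conf_lf \<and> conf_dist \<phi> a x < (1/2) ^ (k + 1) * min e 1"
    then have "(1/2) ^ (k + 1) * min (cmod (a k - x k)) 1 < (1/2) ^ (k + 1) * min e 1"
      using conf_dist_ge_coordinate[of k a x \<phi>] by linarith
    then have "cmod (a k - x k) < e"
      by (auto simp: mult_less_cancel_left_pos min_def split: if_splits)
    then show "x k \<in> U"
      using e by (auto simp: dist_norm)
  qed
qed simp

lemma tendsto_weighted_suminf_zero:
  fixes a :: "nat \<Rightarrow> 'a \<Rightarrow> real"
  assumes "\<And>j. ((\<lambda>s. a j s) \<longlongrightarrow> 0) F" and "\<And>j s. \<bar>a j s\<bar> \<le> 1"
  shows "((\<lambda>s. \<Sum>j. (1/2) ^ (j + 1) * a j s) \<longlongrightarrow> 0) F"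
proof (cases "F = bot")
  case False
  have "((\<lambda>s. \<Sum>j. (1/2) ^ (j + 1) * a j s) \<longlongrightarrow> (\<Sum>j. (1/2::real) ^ (j + 1) * 0)) F"
  proof (rule tannerys_theorem[THEN conjunct2, THEN conjunct2])
    show "((\<lambda>s. (1/2) ^ (j + 1) * a j s) \<longlongrightarrow> (1/2) ^ (j + 1) * 0) F" for j
      by (intro tendsto_intros assms(1))
    show "\<forall>\<^sub>F (j, s) in at_top \<times>\<^sub>F F. norm ((1/2::real) ^ (j + 1) * a j s) \<le> (1/2) ^ (j + 1)"
      using assms(2) by (intro always_eventually) (auto simp: abs_mult intro: mult_left_le)
  qed (use False weights_sums in \<open>auto intro: sums_summable\<close>)
  then show ?thesis
    by simp
qed simp

lemma test_sum_eq_sum_indices: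
  assumes "inj y" "finite K" "\<And>k. g (y k) \<noteq> 0 \<Longrightarrow> k \<in> K"
  shows "test_sum g (range y) = (\<Sum>k\<in>K. g (y k))"
proof -
  have "test_sum g (range y) = sum g (y ` K)"
    unfolding test_sum_def using assms by (intro sum.mono_neutral_left) auto
  also have "\<dots> = (\<Sum>k\<in>K. g (y k))"
    using sum.reindex[OF inj_on_subset[OF assms(1)]] by simp
  finally show ?thesis .
qed

lemma tendsto_test_sum:
  fixes g :: "complex \<Rightarrow> real"
  assumes g: "continuous_on UNIV g" "bounded {z. g z \<noteq> 0}"
    and x: "x \<in> conf_lf" and y: "\<forall>\<^sub>F s in F. inj (y s)" and lim: "uniform_limit UNIV y x F"
  shows "((\<lambda>s. test_sum g (range (y s))) \<longlongrightarrow> test_sum g (range x)) F"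
proof -
  obtain R where R: "R > 0" "\<And>z. g z \<noteq> 0 \<Longrightarrow> cmod z \<le> R"
    using g(2) unfolding bounded_pos by auto
  define K where "K = {k. cmod (x k) \<le> R + 1}"
  have K: "finite K"
    using x R(1) by (simp add: conf_lf_def K_def)
  have sum_x: "test_sum g (range x) = (\<Sum>k\<in>K. g (x k))"
    using x K by (intro test_sum_eq_sum_indices) (auto simp: conf_lf_def K_def dest: R(2))
  have "((\<lambda>s. \<Sum>k\<in>K. g (y s k)) \<longlongrightarrow> test_sum g (range x)) F"
    unfolding sum_x
    by (intro tendsto_sum continuous_on_tendsto_compose[OF g(1)] tendsto_uniform_limitI[OF lim]) auto
  moreover have "\<forall>\<^sub>F s in F. (\<Sum>k\<in>K. g (y s k)) = test_sum g (range (y s))"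
    using y uniform_limitD[OF lim zero_less_one]
  proof eventually_elim
    case (elim s)
    have "k \<in> K" if "g (y s k) \<noteq> 0" for k
    proof -
      have "cmod (x k) \<le> cmod (y s k) + dist (y s k) (x k)"
        using norm_triangle_sub[of "x k" "y s k"] by (simp add: dist_norm norm_minus_commute)
      moreover have "dist (y s k) (x k) < 1"
        using elim by simp
      ultimately show ?thesis
        using R(2)[OF that] by (simp add: K_def)
    qed
    then show ?case
      using elim K by (intro test_sum_eq_sum_indices[symmetric]) auto
  qed
  ultimately show ?thesis
    by (rule Lim_transform_eventually)
qed

lemma tendsto_conf_dist_uniform_limit:
  assumes adm: "admissible_tests \<phi>" and x: "x \<in> conf_lf" and y: "\<forall>\<^sub>F s in F. y s \<in> conf_lf"
    and lim: "uniform_limit UNIV y x F"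
  shows "((\<lambda>s. conf_dist \<phi> (y s) x) \<longlongrightarrow> 0) F"
proof -
  have "((\<lambda>s. \<Sum>j. (1/2) ^ (j + 1) * min (cmod (y s j - x j)) 1) \<longlongrightarrow> 0) F"
  proof (rule tendsto_weighted_suminf_zero)
    fix j
    have "((\<lambda>s. min (cmod (y s j - x j)) 1) \<longlongrightarrow> min (cmod (x j - x j)) 1) F"
      by (intro tendsto_intros tendsto_uniform_limitI[OF lim]) simp
    then show "((\<lambda>s. min (cmod (y s j - x j)) 1) \<longlongrightarrow> 0) F"
      by simp
  qed simp
  moreover have "((\<lambda>s. vague_dist \<phi> (range (y s)) (range x)) \<longlongrightarrow> 0) F"
    unfolding vague_dist_def
  proof (rule tendsto_weighted_suminf_zero)
    fix j
    have "continuous_on UNIV (\<phi> j)" "bounded {z. \<phi> j z \<noteq> 0}"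
      using adm unfolding admissible_tests_def
      by (auto intro: bounded_subset[OF compact_imp_bounded closure_subset])
    then have "((\<lambda>s. test_sum (\<phi> j) (range (y s))) \<longlongrightarrow> test_sum (\<phi> j) (range x)) F"
      using x lim y by (intro tendsto_test_sum) (auto elim: eventually_mono simp: conf_lf_def)
    then show "((\<lambda>s. \<bar>test_sum (\<phi> j) (range (y s)) - test_sum (\<phi> j) (range x)\<bar> /
                 (1 + \<bar>test_sum (\<phi> j) (range (y s)) - test_sum (\<phi> j) (range x)\<bar>)) \<longlongrightarrow> 0) F"
      by (auto intro!: tendsto_eq_intros)
  qed simp
  ultimately show ?thesis
    unfolding conf_dist_def using tendsto_add by fastforce
qed

lemma continuous_map_conf_topology_uniform:
  assumes adm: "admissible_tests \<phi>" and "\<gamma> \<in> topspace X \<rightarrow> conf_lf"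
    and "\<And>t. t \<in> topspace X \<Longrightarrow> uniform_limit UNIV \<gamma> (\<gamma> t) (atin X t)"
  shows "continuous_map X (conf_topology \<phi>) \<gamma>"
  unfolding continuous_map_atin conf_topology_def Metric_space.limitin_metric[OF conf_dist_metric]
proof (intro ballI conjI allI impI)
  fix t and \<epsilon> :: real assume t: "t \<in> topspace X" and "\<epsilon> > 0"
  have near: "\<forall>\<^sub>F s in atin X t. \<gamma> s \<in> conf_lf"
    using assms(2) by (auto simp: atin_def eventually_inf_principal intro: always_eventually)
  then have "((\<lambda>s. conf_dist \<phi> (\<gamma> s) (\<gamma> t)) \<longlongrightarrow> 0) (atin X t)"
    using t assms(2) by (intro tendsto_conf_dist_uniform_limit[OF adm _ _ assms(3)]) auto
  then have "\<forall>\<^sub>F s in atin X t. conf_dist \<phi> (\<gamma> s) (\<gamma> t) < \<epsilon>"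
    using \<open>\<epsilon> > 0\<close> by (rule order_tendstoD)
  with near show "\<forall>\<^sub>F s in atin X t. \<gamma> s \<in> conf_lf \<and> conf_dist \<phi> (\<gamma> s) (\<gamma> t) < \<epsilon>"
    by (rule eventually_conj)
qed (use assms(2) in auto)

text \<open>Indices 2k and 2k+1 carry the points 2k+1 and 2k+2 of nat_config; pair_centre k is
  their midpoint.\<close>

definition pair_centre :: "nat \<Rightarrow> complex" where
  "pair_centre k = of_real (2 * real k + 3/2)"

definition twist :: "nat set \<Rightarrow> real \<Rightarrow> nat \<Rightarrow> complex" where
  "twist S t k = (if k \<in> S then circlepath 0 1 t else 1)"

definition twist_loop :: "nat set \<Rightarrow> real \<Rightarrow> nat \<Rightarrow> complex" where
  "twist_loop S t j = pair_centre (j div 2) + (nat_config j - pair_centre (j div 2)) * twist S t (j div 2)"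

lemma nat_config_minus_pair_centre:
  "nat_config j - pair_centre (j div 2) = (if even j then - 1/2 else 1/2)"
  by (cases "even j") (auto elim!: evenE oddE simp: nat_config_def pair_centre_def)

lemma norm_twist [simp]: "cmod (twist S t k) = 1"
  by (simp add: twist_def circlepath norm_exp_eq_Re)

lemma twist_loop_endpoints: "twist_loop S 0 = nat_config" "twist_loop S 1 = nat_config"
  by (auto simp: twist_loop_def twist_def pathstart_circlepath[unfolded pathstart_def]
      pathfinish_circlepath[unfolded pathfinish_def])

lemma norm_twist_loop_minus_pair_centre: "cmod (twist_loop S t j - pair_centre (j div 2)) = 1/2"
  by (simp add: twist_loop_def nat_config_minus_pair_centre norm_mult)

lemma inj_twist_loop: "inj (twist_loop S t)"
proof
  fix i j assume eq: "twist_loop S t i = twist_loop S t j"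
  have "cmod (pair_centre (i div 2) - pair_centre (j div 2)) =
        cmod ((twist_loop S t j - pair_centre (j div 2)) - (twist_loop S t i - pair_centre (i div 2)))"
    using eq by (simp add: algebra_simps)
  also have "\<dots> \<le> 1/2 + 1/2"
    by (rule order_trans[OF norm_triangle_ineq4]) (simp add: norm_twist_loop_minus_pair_centre)
  finally have "cmod (pair_centre (i div 2) - pair_centre (j div 2)) \<le> 1"
    by simp
  moreover have "pair_centre (i div 2) - pair_centre (j div 2) = of_real (2 * real (i div 2) - 2 * real (j div 2))"
    by (simp add: pair_centre_def)
  ultimately have "\<bar>2 * real (i div 2) - 2 * real (j div 2)\<bar> \<le> 1"
    by (metis norm_of_real)
  then have "i div 2 = j div 2"
    by linarith
  then have "nat_config i = nat_config j"
    using eq by (auto simp: twist_loop_def dest: arg_cong[where f = cmod])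
  then show "i = j"
    by (simp add: nat_config_def)
qed

lemma twist_loop_in_conf_lf: "twist_loop S t \<in> conf_lf"
  unfolding conf_lf_def
proof (intro CollectI conjI allI impI inj_twist_loop)
  fix R :: real
  have "real j \<le> cmod (twist_loop S t j)" for j
  proof -
    have "2 * real (j div 2) + 1 = cmod (pair_centre (j div 2)) - 1/2"
      by (simp only: pair_centre_def norm_of_real)
    also have "\<dots> \<le> cmod (twist_loop S t j)"
      using norm_triangle_ineq2[of "pair_centre (j div 2)" "twist_loop S t j"]
      by (simp add: norm_minus_commute norm_twist_loop_minus_pair_centre)
    finally show ?thesis
      by linarith
  qed
  then have "{j. cmod (twist_loop S t j) \<le> R} \<subseteq> {..nat \<lfloor>R\<rfloor>}"
    by (auto intro: le_nat_floor order_trans)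
  then show "finite {j. cmod (twist_loop S t j) \<le> R}"
    by (rule finite_subset) simp
qed

lemma twist_loop_pair_difference: "twist_loop S t (Suc (2 * k)) - twist_loop S t (2 * k) = twist S t k"
  by (simp add: twist_loop_def nat_config_def algebra_simps)

lemma dist_twist_loop_le: "dist (twist_loop S s j) (twist_loop S t j) \<le> dist (circlepath 0 1 s) (circlepath 0 1 t)"
proof -
  have "dist (twist_loop S s j) (twist_loop S t j) = dist (twist S s (j div 2)) (twist S t (j div 2)) / 2"
    by (simp add: twist_loop_def dist_norm nat_config_minus_pair_centre norm_mult
        flip: right_diff_distrib)
  also have "\<dots> \<le> dist (circlepath 0 1 s) (circlepath 0 1 t)"
    by (simp add: twist_def)
  finally show ?thesis .
qed

lemma pathin_twist_loop:
  assumes "admissible_tests \<phi>"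
  shows "pathin (conf_topology \<phi>) (twist_loop S)"
  unfolding pathin_def
proof (rule continuous_map_conf_topology_uniform[OF assms])
  show "twist_loop S \<in> topspace (top_of_set {0..1}) \<rightarrow> conf_lf"
    by (simp add: twist_loop_in_conf_lf)
  fix t assume t: "t \<in> topspace (top_of_set {0..1::real})"
  have "(circlepath 0 1 \<longlongrightarrow> circlepath 0 1 t) (atin (top_of_set {0..1}) t)"
    using limitin_continuous_map[OF _ t refl, of euclidean "circlepath 0 1"]
    by (simp add: path_circlepath[unfolded path_def])
  then show "uniform_limit UNIV (twist_loop S) (twist_loop S t) (atin (top_of_set {0..1}) t)"
    unfolding uniform_limit_iff
  proof (intro allI impI)
    fix e :: real assume "e > 0"
    with \<open>(circlepath 0 1 \<longlongrightarrow> circlepath 0 1 t) _\<close>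
    have "\<forall>\<^sub>F s in atin (top_of_set {0..1}) t. dist (circlepath 0 1 s) (circlepath 0 1 t) < e"
      by (rule tendstoD)
    then show "\<forall>\<^sub>F s in atin (top_of_set {0..1}) t. \<forall>k\<in>UNIV. dist (twist_loop S s k) (twist_loop S t k) < e"
      by eventually_elim (auto intro: le_less_trans[OF dist_twist_loop_le])
  qed
qed

lemma twist_loop_in_loops_at:
  assumes "admissible_tests \<phi>"
  shows "twist_loop S \<in> loops_at (conf_topology \<phi>) nat_config"
  using pathin_twist_loop[OF assms] by (simp add: loops_at_def twist_loop_endpoints)

lemma winding_number_twist: "winding_number (\<lambda>t. twist S t k) 0 = (if k \<in> S then 1 else 0)"
proof -
  have "(\<lambda>t. twist S t k) = (if k \<in> S then circlepath 0 1 else linepath 1 1)"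
    by (auto simp: twist_def linepath_def algebra_simps simp flip: scaleR_add_left)
  then show ?thesis
    by (simp add: winding_number_circlepath_centre)
qed

lemma loop_homotopic_iff_homotopic_with:
  "loop_homotopic X b p q \<longleftrightarrow> homotopic_with (\<lambda>g. g 0 = b \<and> g 1 = b) (top_of_set {0..1}) X p q"
  unfolding loop_homotopic_def by (subst homotopic_with) auto

lemma loop_homotopic_refl: "g \<in> loops_at X b \<Longrightarrow> loop_homotopic X b g g"
  by (simp add: loop_homotopic_iff_homotopic_with loops_at_def pathin_def)

lemma homotopic_loops_coordinate_difference:
  assumes "loop_homotopic (conf_topology \<phi>) b p q" and "i \<noteq> j"
  shows "homotopic_loops (-{0}) (\<lambda>t. p t i - p t j) (\<lambda>t. q t i - q t j)"
proof -
  have "continuous_map (conf_topology \<phi>) (top_of_set (-{0})) (\<lambda>x. x i - x j)"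
    unfolding continuous_map_in_subtopology using assms(2)
    by (auto simp: topspace_conf_topology conf_lf_def inj_eq
        intro: continuous_map_diff continuous_map_conf_coordinate)
  from homotopic_with_compose_continuous_map_left
       [OF assms(1)[unfolded loop_homotopic_iff_homotopic_with] this]
  show ?thesis
    unfolding homotopic_loops_def by (simp add: o_def pathstart_def pathfinish_def)
qed

lemma twist_loop_homotopic_imp_eq:
  assumes "loop_homotopic (conf_topology \<phi>) nat_config (twist_loop S) (twist_loop T)"
  shows "S = T"
proof (rule set_eqI)
  fix k
  have "homotopic_loops (-{0}) (\<lambda>t. twist S t k) (\<lambda>t. twist T t k)"
    using homotopic_loops_coordinate_difference[OF assms, of "Suc (2 * k)" "2 * k"]
    by (simp add: twist_loop_pair_difference)
  then have "winding_number (\<lambda>t. twist S t k) 0 = winding_number (\<lambda>t. twist T t k) 0"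
    by (rule winding_number_homotopic_loops)
  then show "k \<in> S \<longleftrightarrow> k \<in> T"
    by (simp add: winding_number_twist split: if_splits)
qed

lemma countable_if_pairwise_non_homotopic_loops:
  assumes "countable (fundamental_group_set X b)"
    and loops: "\<And>a. a \<in> A \<Longrightarrow> f a \<in> loops_at X b"
    and non_homotopic: "\<And>a a'. a \<in> A \<Longrightarrow> a' \<in> A \<Longrightarrow> loop_homotopic X b (f a) (f a') \<Longrightarrow> a = a'"
  shows "countable A"
proof -
  define R where "R = {(p, q). p \<in> loops_at X b \<and> q \<in> loops_at X b \<and> loop_homotopic X b p q}"
  define cls where "cls a = R `` {f a}" for a
  have "cls ` A \<subseteq> fundamental_group_set X b"
  proof (rule image_subsetI)
    fix a assume "a \<in> A"
    then show "cls a \<in> fundamental_group_set X b"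
      unfolding fundamental_group_set_def cls_def R_def by (intro quotientI loops)
  qed
  moreover have "inj_on cls A"
  proof (rule inj_onI)
    fix a a' assume a: "a \<in> A" "a' \<in> A" and "cls a = cls a'"
    moreover have "f a' \<in> cls a'"
      using loops[OF a(2)] loop_homotopic_refl[OF loops[OF a(2)]] by (simp add: cls_def R_def)
    ultimately have "f a' \<in> cls a"
      by simp
    then have "loop_homotopic X b (f a) (f a')"
      by (simp add: cls_def R_def)
    then show "a = a'"
      using non_homotopic a by blast
  qed
  ultimately show ?thesis
    using assms(1) countable_subset countable_image_inj_on by metis
qed

lemma uncountable_UNIV_nat_set: "uncountable (UNIV :: nat set set)"
proof
  assume "countable (UNIV :: nat set set)"
  then have "range (from_nat_into (UNIV :: nat set set)) = Pow UNIV"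
    by (simp add: range_from_nat_into)
  then show False
    using Cantors_theorem by blast
qed

theorem mainTheorem5:
  fixes \<phi> :: "nat \<Rightarrow> complex \<Rightarrow> real"
  assumes "admissible_tests \<phi>"
  shows "\<not> countable (fundamental_group_set (conf_topology \<phi>) nat_config)"
proof
  assume "countable (fundamental_group_set (conf_topology \<phi>) nat_config)"
  then have "countable (UNIV :: nat set set)"
    by (rule countable_if_pairwise_non_homotopic_loops
        [OF _ twist_loop_in_loops_at[OF assms] twist_loop_homotopic_imp_eq])
  then show False
    using uncountable_UNIV_nat_set by blast
qed

end
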